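(* Let $A_\alpha$ be the adjacency operator with a periodic magnetic potential $\alpha$ on a periodic graph $\mathcal G$. Then its total bandwidth satisfies, for every $n\in\mathbb N$, $$\mathfrak S(A_\alpha)\ge\frac{\max\{\widetilde B_{\alpha,n}^+,2\widetilde B_{\alpha,n}^{odd}\}}{n\varkappa_+^{\,n-1}},\qquad \widetilde B_{\alpha,n}^+=\Big|\sum_{\mathbf c\in\mathcal C_n^+}\cos\alpha(\mathbf c)\Big|,\quad \widetilde B_{\alpha,n}^{odd}=\Big|\sum_{\mathbf c\in\mathcal C_n^{odd}}\cos\alpha(\mathbf c)\Big|.$$
   Context: Let $\Gamma\subset\mathbb R^d$ be a lattice with basis $\mathfrak a_1,\dots,\mathfrak a_d$ and fundamental cell $\Omega=\{\sum_sx_s\mathfrak a_s:(x_s)\in[0,1)^d\}$. Let $\mathcal G=(\mathcal V,\mathcal E)$ be a connected, locally finite, infinite graph embedded in $\mathbb R^d$ (loops, multiple edges allowed), invariant under $\Gamma$-translations, with finite quotient $\mathcal G_*=(\mathcal V_*,\mathcal E_* )$; $\nu=\#\mathcal V_*$. Oriented edges $\mathcal A,\mathcal A_*$; $\underline{\mathbf e}$ inverse; $\varkappa_x$ = number of oriented edges starting at $x$ (loops counted twice); $\varkappa_+=\max_{\mathcal V_*}\varkappa_x$. Edge index: $x=x_0+[x]$, $x_0\in\mathcal V\cap\Omega$, $[x]\in\Gamma$ with coordinates $[x]_{\mathbb A}\in\mathbb Z^d$; $\tau((x,y))=[y]_{\mathbb A}-[x]_{\mathbb A}$, defined on $\mathcal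 A_*$. Periodic magnetic potential $\alpha:\mathcal A\to\mathbb R$ with $\alpha(\underline{\mathbf e})=-\alpha(\mathbf e)$, $\Gamma$-invariant. $(A_\alpha f)_x=\sum_{\mathbf e=(x,y)\in\mathcal A}e^{i\alpha(\mathbf e)}f_y$ on $\ell^2(\mathcal V)$; fiber operators $(A_\alpha(k)f)_x=\sum_{\mathbf e=(x,y)\in\mathcal A_*}e^{i(\alpha(\mathbf e)+\langle\tau(\mathbf e),k\rangle)}f_y$ on $\mathbb C^\nu$, $k\in\mathbb T^d=\mathbb R^d/(2\pi\mathbb Z)^d$, with eigenvalues $\lambda^o_{\alpha,1}(k)\le\dots\le\lambda^o_{\alpha,\nu}(k)$; bands $\sigma_j(A_\alpha)=\lambda^o_{\alpha,j}(\mathbb T^d)$; $\mathfrak S(A_\alpha)=\sum_j|\sigma_j(A_\alpha)|$. Cycles of $\mathcal G_*$: ordered sequences of oriented edges $(\mathbf e_1,\dots,\mathbf e_n)$, $\mathbf e_s=(x_{s-1},x_s)$, $x_n=x_0$ (cyclic shifts distinct, backtracking allowed); index $\tau(\mathbf c)=\sum\tau(\mathbf e)$; flux $\alpha(\mathbf c)=(\sum\alpha(\mathbf e))\bmod 2\pi$. $\mathcal C_n^+$: cycles of length $n$ with non-zero index; $\mathcal C_n^{odd}$: cycles of length $n$ with $\langle\tau(\mathbf c),(1,\dots,1)\rangle$ odd. *)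

theory Defs
  imports "HOL-Analysis.Analysis" "HOL-Computational_Algebra.Polynomial" "HOL-Library.Multiset"
begin

text \<open>The periodic graph is described through its finite quotient: vertices of type 'v
 (the set V_*), oriented edges of type 'e (the set A_*), with source/target maps,
 the edge inversion, the edge index tau (values in Z^d, d = CARD('d)) and the
 magnetic potential alpha on oriented edges.\<close>

definition inner_idx :: "int^'d \<Rightarrow> real^'d \<Rightarrow> real" where
  "inner_idx m k = (\<Sum>j\<in>UNIV. of_int (m $ j) * k $ j)"

definition fiber_matrix ::
  "('e::finite \<Rightarrow> 'v::finite) \<Rightarrow> ('e \<Rightarrow> 'v) \<Rightarrow> ('e \<Rightarrow> real) \<Rightarrow> ('e \<Rightarrow> int^'d) \<Rightarrow> real^'d \<Rightarrow> complex^'v^'v" where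
  "fiber_matrix src tgt \<alpha> \<tau> k =
     (\<chi> x y. \<Sum>e\<in>{e. src e = x \<and> tgt e = y}. cis (\<alpha> e + inner_idx (\<tau> e) k))"

definition charpoly_mat :: "complex^'v::finite^'v \<Rightarrow> complex poly" where
  "charpoly_mat M = det (\<chi> i j. (if i = j then [:0, 1:] else 0) - [: M $ i $ j :])"

text \<open>Eigenvalues counted with multiplicity, in increasing order (0-indexed):
  lambda_{j+1}(k) of the paper is band_fun ... j k.\<close>
definition eigenvalues_sorted :: "complex^'v::finite^'v \<Rightarrow> real list" where
  "eigenvalues_sorted M = sorted_list_of_multiset (image_mset Re (proots (charpoly_mat M)))"

definition band_fun ::
  "('e::finite \<Rightarrow> 'v::finite) \<Rightarrow> ('e \<Rightarrow> 'v) \<Rightarrow> ('e \<Rightarrow> real) \<Rightarrow> ('e \<Rightarrow> int^'d) \<Rightarrow> nat \<Rightarrow> real^'d \<Rightarrow> real" where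
  "band_fun src tgt \<alpha> \<tau> j k = eigenvalues_sorted (fiber_matrix src tgt \<alpha> \<tau> k) ! j"

text \<open>Total bandwidth: sum of the Lebesgue measures of the bands
  sigma_j = lambda_j(T^d) (k ranges over R^d; the fiber operators are 2pi-periodic in k).\<close>
definition total_bandwidth ::
  "('e::finite \<Rightarrow> 'v::finite) \<Rightarrow> ('e \<Rightarrow> 'v) \<Rightarrow> ('e \<Rightarrow> real) \<Rightarrow> ('e \<Rightarrow> int^'d) \<Rightarrow> real" where
  "total_bandwidth src tgt \<alpha> \<tau> =
     (\<Sum>j<CARD('v). measure lborel (range (band_fun src tgt \<alpha> \<tau> j)))"

definition is_walk :: "('e \<Rightarrow> 'v) \<Rightarrow> ('e \<Rightarrow> 'v) \<Rightarrow> 'v \<Rightarrow> 'v \<Rightarrow> 'e list \<Rightarrow> bool" where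
  "is_walk src tgt x y c =
     (if c = [] then x = y
      else src (hd c) = x \<and> tgt (last c) = y \<and>
           (\<forall>i < length c - 1. tgt (c ! i) = src (c ! (i + 1))))"

definition is_cycle :: "('e \<Rightarrow> 'v) \<Rightarrow> ('e \<Rightarrow> 'v) \<Rightarrow> 'e list \<Rightarrow> bool" where
  "is_cycle src tgt c =
     (c \<noteq> [] \<and> (\<forall>i < length c. tgt (c ! i) = src (c ! ((i + 1) mod length c))))"

definition walk_index :: "('e \<Rightarrow> int^'d) \<Rightarrow> 'e list \<Rightarrow> int^'d" where
  "walk_index \<tau> c = sum_list (map \<tau> c)"

definition flux :: "('e \<Rightarrow> real) \<Rightarrow> 'e list \<Rightarrow> real" where
  "flux \<alpha> c = sum_list (map \<alpha> c)"

definition cycles_plus ::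
  "('e \<Rightarrow> 'v) \<Rightarrow> ('e \<Rightarrow> 'v) \<Rightarrow> ('e \<Rightarrow> int^'d) \<Rightarrow> nat \<Rightarrow> 'e list set" where
  "cycles_plus src tgt \<tau> n =
     {c. length c = n \<and> is_cycle src tgt c \<and> walk_index \<tau> c \<noteq> 0}"

definition cycles_odd ::
  "('e \<Rightarrow> 'v) \<Rightarrow> ('e \<Rightarrow> 'v) \<Rightarrow> ('e \<Rightarrow> int^'d) \<Rightarrow> nat \<Rightarrow> 'e list set" where
  "cycles_odd src tgt \<tau> n =
     {c. length c = n \<and> is_cycle src tgt c \<and> odd (\<Sum>j\<in>UNIV. walk_index \<tau> c $ j)}"

definition degree_at :: "('e::finite \<Rightarrow> 'v) \<Rightarrow> 'v \<Rightarrow> nat" where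
  "degree_at src x = card {e. src e = x}"

definition max_degree :: "('e::finite \<Rightarrow> 'v::finite) \<Rightarrow> nat" where
  "max_degree src = Max (range (degree_at src))"

end

(*
  For every quasimomentum k the fiber matrix A(k) is Hermitian with row sums at most kappa_+,
  so its sorted eigenvalues lambda_j(k) are real, lie in [-kappa_+, kappa_+] and satisfy
  sum_j lambda_j(k)^n = tr A(k)^n.  Expanding the trace over closed walks shows that
  L(k) = sum_j lambda_j(k)^n is the trigonometric polynomial sum_c cos (alpha(c) + <tau(c), k>)
  over the cycles c of length n.  Roots of monic polynomials depend continuously on the
  coefficients, so every band sigma_j is an interval containing lambda_j(a) and lambda_j(b),
  and |L(a) - L(b)| <= n kappa_+^(n-1) S(A).  Averaging L(0) - L(k) over a fine grid of
  quasimomenta leaves exactly the cycles of non-zero index, and comparing L(0) with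
  L(pi, ..., pi) leaves twice the cycles with odd coordinate sum of the index.
*)

theory Submission
  imports Defs "Jordan_Normal_Form.Schur_Decomposition"
begin

no_notation Matrix.vec_index (infixl \<open>$\<close> 100)
(* The theorem uses inv as a variable name. *)
no_notation m_inv (\<open>(\<open>open_block notation=\<open>prefix inv\<close>\<close>inv\<index> _)\<close> [81] 80)
hide_const (open) Matrix.mat Determinant.det

section \<open>Schur triangularization of Cartesian matrices\<close>

lemma to_nat_on_UNIV_bij: "bij_betw (to_nat_on (UNIV :: 'a::finite set)) UNIV {..<CARD('a)}"
  by (rule to_nat_on_finite) simp

lemma to_nat_on_UNIV_less [simp]: "to_nat_on UNIV (x :: 'a::finite) < CARD('a)"
  using bij_betw_apply[OF to_nat_on_UNIV_bij] by blast

lemma to_nat_on_from_nat_into_UNIV [simp]: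
  "i < CARD('a) \<Longrightarrow> to_nat_on UNIV (from_nat_into (UNIV :: 'a::finite set) i) = i"
  by (metis to_nat_on_from_nat_into to_nat_on_UNIV_bij bij_betw_imp_surj_on lessThan_iff)

lemma sum_lessThan_CARD_to_nat_on:
  "(\<Sum>i<CARD('a::finite). h i) = (\<Sum>x\<in>(UNIV :: 'a set). h (to_nat_on UNIV x))"
  using sum.reindex_bij_betw[OF to_nat_on_UNIV_bij[where 'a='a], of h] by simp

definition from_hma_mat :: "'b^'n::finite^'n \<Rightarrow> 'b Matrix.mat" where
  "from_hma_mat M =
     Matrix.mat CARD('n) CARD('n) (\<lambda>(i, j). M $ from_nat_into UNIV i $ from_nat_into UNIV j)"

definition to_hma_mat :: "'b Matrix.mat \<Rightarrow> 'b^'n::finite^'n" where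
  "to_hma_mat X = (\<chi> i j. X $$ (to_nat_on UNIV i, to_nat_on UNIV j))"

lemma from_hma_mat_carrier [simp]:
  "from_hma_mat (M :: 'b^'n::finite^'n) \<in> carrier_mat CARD('n) CARD('n)"
  by (simp add: from_hma_mat_def)

lemma to_hma_from_hma_mat [simp]: "to_hma_mat (from_hma_mat M) = M"
  by (simp add: to_hma_mat_def from_hma_mat_def vec_eq_iff)

lemma to_hma_mat_mult:
  assumes "X \<in> carrier_mat CARD('n) CARD('n)" "Y \<in> carrier_mat CARD('n) CARD('n)"
  shows "(to_hma_mat (X * Y) :: 'b::comm_semiring_1^'n::finite^'n) = to_hma_mat X ** to_hma_mat Y"
  using assms
  by (simp add: to_hma_mat_def matrix_matrix_mult_def vec_eq_iff scalar_prod_def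
      atLeast0LessThan sum_lessThan_CARD_to_nat_on)

lemma to_hma_mat_one: "(to_hma_mat (1\<^sub>m CARD('n)) :: 'b::comm_semiring_1^'n::finite^'n) = mat 1"
  by (simp add: to_hma_mat_def vec_eq_iff Finite_Cartesian_Product.mat_def)

lemma hma_eigenvector_of_eigenvalue:
  fixes M :: "complex^'n::finite^'n"
  assumes "eigenvalue (from_hma_mat M) z"
  obtains v where "v \<noteq> 0" "M *v v = z *s v"
proof -
  from assms obtain u where u: "u \<in> carrier_vec CARD('n)" "u \<noteq> 0\<^sub>v CARD('n)"
    and Mu: "from_hma_mat M *\<^sub>v u = z \<cdot>\<^sub>v u"
    unfolding eigenvalue_def eigenvector_def by (auto simp: from_hma_mat_def)
  define v :: "complex^'n" where "v = (\<chi> x. vec_index u (to_nat_on UNIV x))"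
  obtain i where i: "i < CARD('n)" "vec_index u i \<noteq> 0"
    using u by (metis eq_vecI index_zero_vec carrier_vecD)
  then have "v $ from_nat_into UNIV i \<noteq> 0"
    by (simp add: v_def)
  then have "v \<noteq> 0" by auto
  moreover have "M *v v = z *s v"
    unfolding Finite_Cartesian_Product.vec_eq_iff
  proof
    fix x :: 'n
    have "vec_index (from_hma_mat M *\<^sub>v u) (to_nat_on UNIV x) = z * vec_index u (to_nat_on UNIV x)"
      using Mu u(1) by simp
    then show "(M *v v) $ x = (z *s v) $ x"
      using u(1) by (simp add: from_hma_mat_def scalar_prod_def matrix_vector_mult_def v_def
          atLeast0LessThan sum_lessThan_CARD_to_nat_on)
  qed
  ultimately show thesis by (rule that)
qed

definition upper_triangular_wrt :: "('n \<Rightarrow> nat) \<Rightarrow> 'a::zero^'n^'n \<Rightarrow> bool" where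
  "upper_triangular_wrt f A \<longleftrightarrow> (\<forall>i j. f j < f i \<longrightarrow> A $ i $ j = 0)"

lemma schur_decomposition_hma:
  fixes M :: "complex^'n::finite^'n"
  obtains P Q B :: "complex^'n^'n"
  where "P ** Q = mat 1" "Q ** P = mat 1" "M = P ** B ** Q"
    and "upper_triangular_wrt (to_nat_on UNIV) B"
    and "\<And>i. eigenvalue (from_hma_mat M) (B $ i $ i)"
proof -
  let ?n = "CARD('n)" and ?A = "from_hma_mat M"
  have A: "?A \<in> carrier_mat ?n ?n" by simp
  obtain es where es: "char_poly ?A = (\<Prod>a\<leftarrow>es. [:- a, 1:])" "length es = ?n"
    using char_poly_factorized[OF A] by blast
  obtain B' P' Q' where "schur_decomposition ?A es = (B', P', Q')"
    by (cases "schur_decomposition ?A es") auto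
  from schur_decomposition[OF A es(1) this]
  have sim: "similar_mat_wit ?A B' P' Q'" and ut: "upper_triangular B'" and dg: "diag_mat B' = es"
    by auto
  from similar_mat_witD2[OF A sim]
  have c: "B' \<in> carrier_mat ?n ?n" "P' \<in> carrier_mat ?n ?n" "Q' \<in> carrier_mat ?n ?n"
    and PQ: "P' * Q' = 1\<^sub>m ?n" and QP: "Q' * P' = 1\<^sub>m ?n" and APBQ: "?A = P' * B' * Q'"
    by auto
  show thesis
  proof (rule that[of "to_hma_mat P'" "to_hma_mat Q'" "to_hma_mat B'"])
    show "to_hma_mat P' ** to_hma_mat Q' = (mat 1 :: complex^'n^'n)"
      using to_hma_mat_mult[OF c(2,3)] PQ to_hma_mat_one by metis
    show "to_hma_mat Q' ** to_hma_mat P' = (mat 1 :: complex^'n^'n)"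
      using to_hma_mat_mult[OF c(3,2)] QP to_hma_mat_one by metis
    have "M = to_hma_mat (P' * B' * Q')"
      using APBQ by (metis to_hma_from_hma_mat)
    also have "\<dots> = to_hma_mat P' ** to_hma_mat B' ** to_hma_mat Q'"
      using c by (simp add: to_hma_mat_mult matrix_mul_assoc)
    finally show "M = to_hma_mat P' ** to_hma_mat B' ** (to_hma_mat Q' :: complex^'n^'n)" .
    show "upper_triangular_wrt (to_nat_on UNIV) (to_hma_mat B' :: complex^'n^'n)"
      using ut c(1) by (auto simp: upper_triangular_wrt_def upper_triangular_def to_hma_mat_def)
    fix i :: 'n
    have "(to_hma_mat B' :: complex^'n^'n) $ i $ i \<in> set es"
      using c(1) es(2) by (auto simp: to_hma_mat_def dg[symmetric] diag_mat_def)
    then show "eigenvalue ?A ((to_hma_mat B' :: complex^'n^'n) $ i $ i)"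
      by (simp add: eigenvalue_root_char_poly[OF A] es(1) poly_prod_list prod_list_zero_iff)
  qed
qed

lemma permutation_decreases_somewhere:
  fixes f :: "'n::finite \<Rightarrow> nat"
  assumes "inj f" "p permutes UNIV" "p \<noteq> id"
  obtains i where "f (p i) < f i"
proof -
  have "\<exists>i. f (p i) < f i"
  proof (rule ccontr)
    assume "\<nexists>i. f (p i) < f i"
    then have le: "f i \<le> f (p i)" for i
      by (simp add: not_less)
    have "(\<Sum>i\<in>UNIV. f (p i)) = (\<Sum>i\<in>UNIV. f i)"
      using sum.reindex_bij_betw[OF permutes_imp_bij[OF assms(2)], of f] by simp
    then have "f i = f (p i)" for i
      using sum_mono_inv[of f UNIV "\<lambda>i. f (p i)"] le by (metis finite UNIV_I)
    then have "p = id"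
      using \<open>inj f\<close> by (auto simp: inj_eq)
    with \<open>p \<noteq> id\<close> show False ..
  qed
  then show thesis using that by blast
qed

lemma det_upper_triangular_wrt:
  fixes A :: "'a::comm_ring_1^'n::finite^'n"
  assumes "inj f" "upper_triangular_wrt f A"
  shows "det A = (\<Prod>i\<in>UNIV. A $ i $ i)"
proof -
  have "of_int (sign p) * (\<Prod>i\<in>UNIV. A $ i $ p i) = 0"
    if p: "p permutes UNIV" "p \<noteq> id" for p
  proof -
    obtain i where "f (p i) < f i"
      using permutation_decreases_somewhere[OF \<open>inj f\<close> p] .
    then have "A $ i $ p i = 0"
      using assms(2) by (simp add: upper_triangular_wrt_def)
    then have "(\<Prod>i\<in>UNIV. A $ i $ p i) = 0"
      by (intro prod_zero) auto
    then show ?thesis by simp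
  qed
  then have "det A = (\<Sum>p\<in>{id}. of_int (sign p) * (\<Prod>i\<in>UNIV. A $ i $ p i))"
    unfolding Determinants.det_def by (intro sum.mono_neutral_right) (auto simp: permutes_id)
  then show ?thesis by (simp add: sign_id)
qed

lemma upper_triangular_wrt_mult:
  fixes X Y :: "'a::comm_semiring_1^'n::finite^'n"
  assumes "inj f" "upper_triangular_wrt f X" "upper_triangular_wrt f Y"
  shows "upper_triangular_wrt f (X ** Y)"
    and "(X ** Y) $ i $ i = X $ i $ i * Y $ i $ i"
proof -
  show "upper_triangular_wrt f (X ** Y)"
    unfolding upper_triangular_wrt_def
  proof (intro allI impI)
    fix i j assume "f j < f i"
    then have "X $ i $ l * Y $ l $ j = 0" for l
      using assms(2,3) unfolding upper_triangular_wrt_def by (cases "f l < f i") auto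
    then show "(X ** Y) $ i $ j = 0"
      by (simp add: matrix_matrix_mult_def)
  qed
  have "X $ i $ l * Y $ l $ i = 0" if "l \<noteq> i" for l
    using assms that unfolding upper_triangular_wrt_def
    by (metis inj_eq linorder_neqE_nat mult_zero_left mult_zero_right)
  then show "(X ** Y) $ i $ i = X $ i $ i * Y $ i $ i"
    by (simp add: matrix_matrix_mult_def sum.remove[of UNIV i])
qed

fun matrix_power :: "'a::semiring_1^'n^'n \<Rightarrow> nat \<Rightarrow> 'a^'n^'n" where
  "matrix_power M 0 = mat 1"
| "matrix_power M (Suc n) = M ** matrix_power M n"

lemma upper_triangular_wrt_matrix_power:
  fixes B :: "'a::comm_semiring_1^'n::finite^'n"
  assumes "inj f" "upper_triangular_wrt f B"
  shows "upper_triangular_wrt f (matrix_power B n) \<and> (\<forall>i. matrix_power B n $ i $ i = B $ i $ i ^ n)"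
proof (induction n)
  case 0
  then show ?case
    by (auto simp: upper_triangular_wrt_def Finite_Cartesian_Product.mat_def)
next
  case (Suc n)
  then show ?case
    using upper_triangular_wrt_mult[OF assms] by simp
qed

lemma matrix_power_similar:
  assumes "P ** Q = mat 1" "Q ** P = mat 1" "M = P ** B ** Q"
  shows "matrix_power M n = P ** matrix_power B n ** Q"
proof (induction n)
  case 0
  then show ?case using assms(1) by simp
next
  case (Suc n)
  have "matrix_power M (Suc n) = P ** B ** (Q ** P) ** matrix_power B n ** Q"
    using Suc assms(3) by (simp add: matrix_mul_assoc)
  then show ?case
    using assms(2) by (simp add: matrix_mul_assoc)
qed

lemma trace_matrix_power_similar_triangular:
  fixes M P B Q :: "'a::comm_ring_1^'n::finite^'n"
  assumes "P ** Q = mat 1" "Q ** P = mat 1" "M = P ** B ** Q"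
    and "inj f" "upper_triangular_wrt f B"
  shows "trace (matrix_power M n) = (\<Sum>i\<in>UNIV. B $ i $ i ^ n)"
proof -
  have "trace (matrix_power M n) = trace (P ** (matrix_power B n ** Q))"
    using matrix_power_similar[OF assms(1-3)] by (simp add: matrix_mul_assoc)
  also have "\<dots> = trace ((matrix_power B n ** Q) ** P)"
    by (rule trace_mul_sym)
  also have "\<dots> = trace (matrix_power B n)"
    using assms(2) by (simp flip: matrix_mul_assoc)
  also have "\<dots> = (\<Sum>i\<in>UNIV. B $ i $ i ^ n)"
    using upper_triangular_wrt_matrix_power[OF assms(4,5)] by (simp add: trace_def)
  finally show ?thesis .
qed

lemma map_matrix_const_poly_mult:
  "map_matrix (\<lambda>a. [:a:]) (A ** B) = map_matrix (\<lambda>a. [:a:]) A ** map_matrix (\<lambda>a. [:a:]) B"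
  by (simp add: map_matrix_def matrix_matrix_mult_def Finite_Cartesian_Product.vec_eq_iff
      sum_to_poly mult_to_poly mult.commute)

lemma map_matrix_const_poly_one: "map_matrix (\<lambda>a. [:a:]) (mat 1) = mat 1"
  by (simp add: map_matrix_def Finite_Cartesian_Product.mat_def Finite_Cartesian_Product.vec_eq_iff)

lemma matrix_mul_mat_commute: "A ** mat c = mat c ** (A :: 'a::comm_semiring_1^'n::finite^'n)"
  by (simp add: matrix_matrix_mult_def Finite_Cartesian_Product.mat_def
      Finite_Cartesian_Product.vec_eq_iff if_distrib if_distribR mult.commute cong: if_cong)

lemma matrix_diff_ldistrib: "A ** (B - C) = A ** B - A ** (C :: 'a::comm_ring_1^'n^'m)"
  by (simp add: matrix_matrix_mult_def Finite_Cartesian_Product.vec_eq_iff sum_subtractf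
      right_diff_distrib)

lemma matrix_diff_rdistrib: "(B - C) ** A = B ** A - C ** (A :: 'a::comm_ring_1^'n^'m)"
  by (simp add: matrix_matrix_mult_def Finite_Cartesian_Product.vec_eq_iff sum_subtractf
      left_diff_distrib)

lemma charpoly_mat_eq_det: "charpoly_mat M = det (mat [:0, 1:] - map_matrix (\<lambda>a. [:a:]) M)"
  unfolding charpoly_mat_def
  by (rule arg_cong[where f = det]) (simp add: Finite_Cartesian_Product.vec_eq_iff Finite_Cartesian_Product.mat_def map_matrix_def)

lemma charpoly_mat_similar_triangular:
  fixes M P B Q :: "complex^'n::finite^'n"
  assumes PQ: "P ** Q = mat 1" and "M = P ** B ** Q"
    and "inj f" "upper_triangular_wrt f B"
  shows "charpoly_mat M = (\<Prod>i\<in>UNIV. [:- B $ i $ i, 1:])"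
proof -
  let ?X = "mat [:0, 1:] :: complex poly^'n^'n" and ?c = "map_matrix (\<lambda>a. [:a:])"
  have "?c P ** ?X ** ?c Q = ?X ** (?c P ** ?c Q)"
    by (simp add: matrix_mul_mat_commute matrix_mul_assoc)
  also have "\<dots> = ?X"
    using PQ by (simp add: map_matrix_const_poly_mult[symmetric] map_matrix_const_poly_one)
  finally have "?X - ?c M = ?c P ** (?X - ?c B) ** ?c Q"
    using assms(2) by (simp add: map_matrix_const_poly_mult matrix_mul_assoc
        matrix_diff_ldistrib matrix_diff_rdistrib)
  then have "det (?X - ?c M) = det (?X - ?c B) * det (?c P ** ?c Q)"
    by (simp add: det_mul)
  also have "\<dots> = det (?X - ?c B)"
    using PQ by (simp add: map_matrix_const_poly_mult[symmetric] map_matrix_const_poly_one det_I)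
  also have "\<dots> = (\<Prod>i\<in>UNIV. [:- B $ i $ i, 1:])"
    using assms(4) by (subst det_upper_triangular_wrt[OF assms(3)])
      (auto simp: upper_triangular_wrt_def Finite_Cartesian_Product.mat_def)
  finally show ?thesis
    by (simp add: charpoly_mat_eq_det)
qed

lemma charpoly_mat_splits:
  fixes M :: "complex^'n::finite^'n"
  obtains d :: "'n \<Rightarrow> complex"
  where "charpoly_mat M = (\<Prod>i\<in>UNIV. [:- d i, 1:])"
    and "\<And>n. trace (matrix_power M n) = (\<Sum>i\<in>UNIV. d i ^ n)"
    and "\<And>i. \<exists>v. v \<noteq> 0 \<and> M *v v = d i *s v"
proof -
  obtain P Q B :: "complex^'n^'n"
    where sim: "P ** Q = mat 1" "Q ** P = mat 1" "M = P ** B ** Q"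
      and ut: "upper_triangular_wrt (to_nat_on UNIV) B"
      and eig: "\<And>i. eigenvalue (from_hma_mat M) (B $ i $ i)"
    by (rule schur_decomposition_hma[of M]) blast
  have inj: "inj (to_nat_on (UNIV :: 'n set))"
    by (simp add: inj_on_to_nat_on)
  show thesis
  proof (rule that)
    show "charpoly_mat M = (\<Prod>i\<in>UNIV. [:- B $ i $ i, 1:])"
      by (rule charpoly_mat_similar_triangular[OF sim(1,3) inj ut])
    show "trace (matrix_power M n) = (\<Sum>i\<in>UNIV. B $ i $ i ^ n)" for n
      by (rule trace_matrix_power_similar_triangular[OF sim inj ut])
    show "\<exists>v. v \<noteq> 0 \<and> M *v v = B $ i $ i *s v" for i
      using hma_eigenvector_of_eigenvalue[OF eig] by metis
  qed
qed

lemma degree_charpoly_mat: "degree (charpoly_mat (M :: complex^'n::finite^'n)) = CARD('n)"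
proof -
  obtain d :: "'n \<Rightarrow> complex" where "charpoly_mat M = (\<Prod>i\<in>UNIV. [:- d i, 1:])"
    using charpoly_mat_splits by blast
  then show ?thesis
    by (simp add: degree_prod_eq_sum_degree)
qed

lemma monic_charpoly_mat: "monic (charpoly_mat (M :: complex^'n::finite^'n))"
proof -
  obtain d :: "'n \<Rightarrow> complex" where "charpoly_mat M = (\<Prod>i\<in>UNIV. [:- d i, 1:])"
    using charpoly_mat_splits by blast
  then show ?thesis
    by (simp add: lead_coeff_prod)
qed

section \<open>Hermitian matrices\<close>

lemma proots_prod_linear: "proots (\<Prod>i\<in>A. [:- c i, 1:]) = image_mset c (mset_set A)"
  by (induction A rule: infinite_finite_induct) (simp_all add: proots_mult del: mult_pCons_left)

lemma hermitian_eigenvalue_real: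
  fixes M :: "complex^'n::finite^'n"
  assumes herm: "\<And>i j. M $ j $ i = cnj (M $ i $ j)"
    and eig: "M *v v = z *s v" "v \<noteq> 0"
  shows "z \<in> \<real>"
proof -
  define q where "q = (\<Sum>i\<in>UNIV. \<Sum>j\<in>UNIV. cnj (v $ i) * M $ i $ j * v $ j)"
  define r where "r = (\<Sum>i\<in>UNIV. norm (v $ i) ^ 2)"
  have "q = (\<Sum>i\<in>UNIV. cnj (v $ i) * (M *v v) $ i)"
    by (simp add: q_def matrix_vector_mult_def sum_distrib_left mult.assoc)
  also have "\<dots> = z * of_real r"
    using complex_norm_square[of "v $ i" for i]
    by (simp add: eig r_def sum_distrib_left mult.commute mult.left_commute)
  finally have qr: "q = z * of_real r" .
  have "cnj (M $ i $ j) = M $ j $ i" for i j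
    using herm[of j i] by simp
  then have "cnj q = (\<Sum>i\<in>UNIV. \<Sum>j\<in>UNIV. cnj (v $ j) * M $ j $ i * v $ i)"
    by (simp add: q_def mult_ac)
  also have "\<dots> = q"
    unfolding q_def by (rule sum.swap)
  finally have "q \<in> \<real>"
    by (simp add: Reals_cnj_iff)
  obtain i where "v $ i \<noteq> 0"
    using eig(2) by (metis Finite_Cartesian_Product.vec_eq_iff zero_index)
  then have "r \<noteq> 0"
    unfolding r_def by (subst sum_nonneg_eq_0_iff) auto
  then show ?thesis
    using \<open>q \<in> \<real>\<close> qr by (metis Reals_divide Reals_of_real nonzero_mult_div_cancel_right of_real_eq_0_iff)
qed

lemma eigenvalue_norm_le_row_sum:
  fixes M :: "complex^'n::finite^'n"
  assumes row_sum: "\<And>i. (\<Sum>j\<in>UNIV. norm (M $ i $ j)) \<le> D"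
    and eig: "M *v v = z *s v" "v \<noteq> 0"
  shows "norm z \<le> D"
proof -
  have "Max (range (\<lambda>j. norm (v $ j))) \<in> range (\<lambda>j. norm (v $ j))"
    by (rule Max_in) auto
  then obtain i where i: "norm (v $ i) = Max (range (\<lambda>j. norm (v $ j)))"
    by (metis rangeE)
  have max: "norm (v $ j) \<le> norm (v $ i)" for j
    unfolding i by (rule Max_ge) auto
  have pos: "norm (v $ i) > 0"
  proof (rule ccontr)
    assume "\<not> norm (v $ i) > 0"
    then have "v $ j = 0" for j
      using max[of j] by simp
    with eig(2) show False
      by (simp add: Finite_Cartesian_Product.vec_eq_iff)
  qed
  have "norm z * norm (v $ i) = norm (\<Sum>j\<in>UNIV. M $ i $ j * v $ j)"
    using eig(1) by (simp add: norm_mult matrix_vector_mult_def Finite_Cartesian_Product.vec_eq_iff)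
  also have "\<dots> \<le> (\<Sum>j\<in>UNIV. norm (M $ i $ j) * norm (v $ i))"
    by (rule order_trans[OF norm_sum sum_mono]) (simp add: norm_mult mult_left_mono max)
  also have "\<dots> \<le> D * norm (v $ i)"
    using row_sum[of i] pos by (simp add: sum_distrib_right[symmetric])
  finally show ?thesis
    using pos by simp
qed

lemma hermitian_eigenvalues_sorted:
  fixes M :: "complex^'n::finite^'n"
  assumes herm: "\<And>i j. M $ j $ i = cnj (M $ i $ j)"
    and row_sum: "\<And>i. (\<Sum>j\<in>UNIV. norm (M $ i $ j)) \<le> D"
  shows "length (eigenvalues_sorted M) = CARD('n)"
    and "\<And>x. x \<in> set (eigenvalues_sorted M) \<Longrightarrow> \<bar>x\<bar> \<le> D"
    and "(\<Sum>j<CARD('n). eigenvalues_sorted M ! j ^ n) = Re (trace (matrix_power M n))"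
proof -
  obtain d :: "'n \<Rightarrow> complex"
    where cp: "charpoly_mat M = (\<Prod>i\<in>UNIV. [:- d i, 1:])"
      and tr: "\<And>n. trace (matrix_power M n) = (\<Sum>i\<in>UNIV. d i ^ n)"
      and eig: "\<And>i. \<exists>v. v \<noteq> 0 \<and> M *v v = d i *s v"
    using charpoly_mat_splits[of M] by blast
  define b where "b i = Re (d i)" for i
  have d: "d i = of_real (b i)" and bound: "\<bar>b i\<bar> \<le> D" for i
  proof -
    obtain v where "v \<noteq> 0" "M *v v = d i *s v"
      using eig by blast
    then have "d i \<in> \<real>" "norm (d i) \<le> D"
      using hermitian_eigenvalue_real[OF herm] eigenvalue_norm_le_row_sum[OF row_sum] by blast+
    then show "d i = of_real (b i)" "\<bar>b i\<bar> \<le> D"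
      by (auto simp: b_def elim!: Reals_cases)
  qed
  let ?xs = "eigenvalues_sorted M"
  have mset: "mset ?xs = image_mset b (mset_set UNIV)"
    by (simp add: eigenvalues_sorted_def cp proots_prod_linear multiset.map_comp comp_def b_def[abs_def])
  show "length ?xs = CARD('n)"
    using arg_cong[OF mset, of size] by simp
  show "\<bar>x\<bar> \<le> D" if "x \<in> set ?xs" for x
    using arg_cong[OF mset, of set_mset] that bound by auto
  have "(\<Sum>j<CARD('n). ?xs ! j ^ n) = sum_list (map (\<lambda>x. x ^ n) ?xs)"
    using arg_cong[OF mset, of size] by (simp add: sum_list_sum_nth atLeast0LessThan)
  also have "\<dots> = sum_mset (image_mset (\<lambda>x. x ^ n) (mset ?xs))"
    by (metis mset_map sum_mset_sum_list)
  also have "\<dots> = (\<Sum>i\<in>UNIV. b i ^ n)"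
    unfolding mset by (simp add: multiset.map_comp comp_def sum_unfold_sum_mset)
  also have "\<dots> = Re (trace (matrix_power M n))"
    by (simp add: tr d)
  finally show "(\<Sum>j<CARD('n). ?xs ! j ^ n) = Re (trace (matrix_power M n))" .
qed

section \<open>Continuity of the sorted eigenvalues\<close>

lemma tendsto_poly_coeffwise:
  fixes q :: "'a \<Rightarrow> 'b::real_normed_field poly"
  assumes "\<And>x. degree (q x) \<le> N" "degree p \<le> N"
    and "\<And>i. ((\<lambda>x. coeff (q x) i) \<longlongrightarrow> coeff p i) F"
  shows "((\<lambda>x. poly (q x) z) \<longlongrightarrow> poly p z) F"
proof -
  have poly_eq: "poly r z = (\<Sum>i\<le>N. coeff r i * z ^ i)" if "degree r \<le> N" for r :: "'b poly"
    unfolding poly_altdef using that by (intro sum.mono_neutral_left) (auto simp: coeff_eq_0)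
  have "((\<lambda>x. \<Sum>i\<le>N. coeff (q x) i * z ^ i) \<longlongrightarrow> (\<Sum>i\<le>N. coeff p i * z ^ i)) F"
    by (intro tendsto_intros assms(3))
  then show ?thesis
    using assms(1,2) by (simp add: poly_eq)
qed

lemma coeff_synthetic_div:
  "coeff (synthetic_div p c) n = coeff p (Suc n) + c * coeff (synthetic_div p c) (Suc n)"
  using arg_cong[OF synthetic_div_correct[of p c], of "\<lambda>q. coeff q (Suc n)"] by simp

lemma tendsto_coeff_synthetic_div:
  fixes q :: "'a \<Rightarrow> 'b::real_normed_field poly"
  assumes deg: "\<And>x. degree (q x) \<le> N" "degree p \<le> N"
    and coeff: "\<And>i. ((\<lambda>x. coeff (q x) i) \<longlongrightarrow> coeff p i) F"
    and w: "(w \<longlongrightarrow> c) F"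
  shows "((\<lambda>x. coeff (synthetic_div (q x) (w x)) n) \<longlongrightarrow> coeff (synthetic_div p c) n) F"
proof -
  have zero: "coeff (synthetic_div r a) m = 0" if "degree r \<le> m" for r :: "'b poly" and a m
  proof (cases "degree r = 0")
    case True
    then show ?thesis by (simp add: synthetic_div_eq_0_iff[THEN iffD2])
  next
    case False
    then show ?thesis using that by (intro coeff_eq_0) (simp add: degree_synthetic_div)
  qed
  show ?thesis
  proof (cases "n \<le> N")
    case True
    then show ?thesis
    proof (induction n rule: inc_induct)
      case base
      then show ?case using deg by (simp add: zero)
    next
      case (step n)
      then show ?case
        by (subst (1 2) coeff_synthetic_div) (intro tendsto_intros coeff w)
    qed
  next
    case False
    then have "degree (q x) \<le> n" "degree p \<le> n" for x
      using deg by (meson le_trans nat_le_linear)+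
    then show ?thesis by (simp add: zero)
  qed
qed

lemma power_size_le_norm_prod_mset:
  fixes r :: "'b::real_normed_field"
  assumes "\<And>y. y \<in># R \<Longrightarrow> e \<le> norm (r - y)" "0 \<le> e"
  shows "e ^ size R \<le> norm (\<Prod>y\<in>#R. r - y)"
  using assms
proof (induction R)
  case (add x R)
  then have "e * e ^ size R \<le> norm (r - x) * norm (\<Prod>y\<in>#R. r - y)"
    by (intro mult_mono) auto
  then show ?case
    by (simp add: norm_mult)
qed simp

lemma dist_nearest_root_power_le_norm_poly:
  fixes q :: "complex poly"
  assumes "monic q" "w \<in># proots q" "\<And>y. y \<in># proots q \<Longrightarrow> norm (r - w) \<le> norm (r - y)"
  shows "norm (r - w) ^ degree q \<le> norm (poly q r)"
proof -
  have "q = (\<Prod>y\<in>#proots q. [:- y, 1:])"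
    using complex_poly_decompose_multiset[of q] assms(1) by simp
  moreover have "poly (\<Prod>y\<in>#R. [:- y, 1:]) r = (\<Prod>y\<in>#R. r - y)" for R
    by (induction R) (simp_all add: algebra_simps)
  ultimately have "poly q r = (\<Prod>y\<in>#proots q. r - y)"
    by metis
  then show ?thesis
    using power_size_le_norm_prod_mset[of "proots q" "norm (r - w)" r] assms(3)
    by (simp add: size_proots_complex)
qed

lemma poly_eq_0_if_in_proots: "x \<in># proots p \<Longrightarrow> poly p x = 0"
  by (cases "p = 0") simp_all

lemma tendsto_nearest_root:
  fixes q :: "'a \<Rightarrow> complex poly"
  assumes deg: "\<And>x. degree (q x) = degree p" "degree p > 0"
    and monic: "\<And>x. monic (q x)"
    and coeff: "\<And>i. ((\<lambda>x. coeff (q x) i) \<longlongrightarrow> coeff p i) F"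
    and root: "poly p r = 0"
  obtains w where "\<And>x. poly (q x) (w x) = 0" "(w \<longlongrightarrow> r) F"
proof -
  define w where "w x = arg_min_on (\<lambda>y. norm (r - y)) (set_mset (proots (q x)))" for x
  have nonempty: "set_mset (proots (q x)) \<noteq> {}" for x
    using size_proots_complex[of "q x"] deg by auto
  have w: "w x \<in># proots (q x)" for x
    unfolding w_def using arg_min_if_finite(1)[OF finite_set_mset nonempty] by blast
  have nearest: "norm (r - w x) \<le> norm (r - y)" if "y \<in># proots (q x)" for x y
    unfolding w_def using arg_min_if_finite(2)[OF finite_set_mset nonempty] that
    by (meson not_le)
  have "((\<lambda>x. poly (q x) r) \<longlongrightarrow> 0) F"
    using tendsto_poly_coeffwise[of q "degree p" p, OF _ order.refl coeff, of r] deg root by simp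
  have "(w \<longlongrightarrow> r) F"
  proof (rule tendstoI)
    fix e :: real
    assume "e > 0"
    then have "eventually (\<lambda>x. norm (poly (q x) r) < e ^ degree p) F"
      using tendstoD[OF \<open>((\<lambda>x. poly (q x) r) \<longlongrightarrow> 0) F\<close>, of "e ^ degree p"] by simp
    then show "eventually (\<lambda>x. dist (w x) r < e) F"
    proof (rule eventually_mono)
      fix x
      assume "norm (poly (q x) r) < e ^ degree p"
      then have "norm (r - w x) ^ degree p < e ^ degree p"
        using dist_nearest_root_power_le_norm_poly[OF monic w nearest, of x] deg(1) by fastforce
      then show "dist (w x) r < e"
        using \<open>e > 0\<close> by (simp add: dist_norm norm_minus_commute power_less_imp_less_base)
    qed
  qed
  with w show thesis
    using that poly_eq_0_if_in_proots by blast
qed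

lemma monic_synthetic_div_root:
  fixes p :: "'b::idom poly"
  assumes "monic p" "poly p r = 0"
  shows "p = [:- r, 1:] * synthetic_div p r"
    and "monic (synthetic_div p r)"
    and "proots p = add_mset r (proots (synthetic_div p r))"
proof -
  show p: "p = [:- r, 1:] * synthetic_div p r"
    using synthetic_div_correct'[of r p] assms(2) by simp
  show monic: "monic (synthetic_div p r)"
    using assms(1) arg_cong[OF p, of lead_coeff] unfolding lead_coeff_mult by simp
  then have "synthetic_div p r \<noteq> 0"
    by auto
  then show "proots p = add_mset r (proots (synthetic_div p r))"
    by (subst p) (simp add: proots_mult del: mult_pCons_left)
qed

lemma eventually_proots_close:
  fixes q :: "'a \<Rightarrow> complex poly"
  assumes "monic p" "\<And>x. monic (q x)" "\<And>x. degree (q x) = degree p"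
    and "\<And>i. ((\<lambda>x. coeff (q x) i) \<longlongrightarrow> coeff p i) F" and "\<epsilon> > 0"
  shows "eventually (\<lambda>x. rel_mset (\<lambda>a b. norm (a - b) \<le> \<epsilon>) (proots p) (proots (q x))) F"
  using assms(1-4)
\<comment> \<open>Deflate p by a root r and q x by its root nearest to r, which converges to r.\<close>
proof (induction "degree p" arbitrary: p q)
  case 0
  then have "proots p = {#}" "proots (q x) = {#}" for x
    by (metis size_eq_0_iff_empty size_proots_complex)+
  then show ?case
    by (simp add: rel_mset_Zero)
next
  case (Suc m p q)
  obtain r where "r \<in># proots p"
    using size_proots_complex[of p] Suc.hyps(2) by (metis size_empty multiset_nonemptyE nat.distinct(1))
  then have root: "poly p r = 0"
    by (rule poly_eq_0_if_in_proots)
  obtain w where root_q: "\<And>x. poly (q x) (w x) = 0" and lim: "(w \<longlongrightarrow> r) F"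
    using tendsto_nearest_root[OF Suc.prems(3) _ Suc.prems(2,4) root] Suc.hyps(2) by auto
  note p = monic_synthetic_div_root[OF Suc.prems(1) root]
  note q = monic_synthetic_div_root[OF Suc.prems(2) root_q]
  have deg: "degree (synthetic_div (q x) (w x)) = degree (synthetic_div p r)" for x
    using Suc.prems(3)[of x] by (simp add: degree_synthetic_div)
  have "((\<lambda>x. coeff (synthetic_div (q x) (w x)) i) \<longlongrightarrow> coeff (synthetic_div p r) i) F" for i
    using Suc.prems(3,4) lim by (intro tendsto_coeff_synthetic_div[where N = "degree p"]) auto
  then have "eventually (\<lambda>x. rel_mset (\<lambda>a b. norm (a - b) \<le> \<epsilon>)
      (proots (synthetic_div p r)) (proots (synthetic_div (q x) (w x)))) F"
    using Suc.hyps(1)[of "synthetic_div p r"] Suc.hyps(2) p(2) q(2) deg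
    by (simp add: degree_synthetic_div)
  moreover have "eventually (\<lambda>x. norm (r - w x) \<le> \<epsilon>) F"
    using tendstoD[OF lim \<open>\<epsilon> > 0\<close>]
    by (rule eventually_mono) (simp add: dist_norm norm_minus_commute)
  ultimately show ?case
    by eventually_elim (simp add: p(3) q(3) rel_mset_Plus)
qed

lemma size_filter_mset_le_rel_mset:
  assumes "rel_mset R X Y" "\<And>a b. R a b \<Longrightarrow> P a \<Longrightarrow> Q b"
  shows "size (filter_mset P X) \<le> size (filter_mset Q Y)"
proof -
  obtain xs ys where "mset xs = X" "mset ys = Y" "list_all2 R xs ys"
    using assms(1) unfolding rel_mset_def by blast
  moreover from \<open>list_all2 R xs ys\<close> have "length (filter P xs) \<le> length (filter Q ys)"
    by (induction rule: list_all2_induct) (auto dest: assms(2))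
  ultimately show ?thesis
    by (metis mset_filter size_mset)
qed

lemma sorted_nth_less_length_filter_le:
  fixes xs :: "'a::linorder list"
  assumes "sorted xs" "j < length xs"
  shows "j < length (filter (\<lambda>a. a \<le> xs ! j) xs)"
proof -
  have "{..j} \<subseteq> {i. i < length xs \<and> xs ! i \<le> xs ! j}"
    using assms by (auto simp: sorted_iff_nth_mono)
  then have "card {..j} \<le> card {i. i < length xs \<and> xs ! i \<le> xs ! j}"
    by (rule card_mono[rotated]) simp
  then show ?thesis
    by (simp add: length_filter_conv_card)
qed

lemma sorted_nth_le_if_less_length_filter_le:
  fixes ys :: "'a::linorder list"
  assumes "sorted ys" "j < length (filter (\<lambda>a. a \<le> c) ys)"
  shows "ys ! j \<le> c"
proof (rule ccontr)
  assume "\<not> ys ! j \<le> c"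
  have "i < j" if "i < length ys" "ys ! i \<le> c" for i
  proof (rule ccontr)
    assume "\<not> i < j"
    then have "ys ! j \<le> ys ! i"
      using assms(1) that(1) by (simp add: sorted_iff_nth_mono)
    with that(2) \<open>\<not> ys ! j \<le> c\<close> show False
      by simp
  qed
  then have "{i. i < length ys \<and> ys ! i \<le> c} \<subseteq> {..<j}"
    by auto
  then have "card {i. i < length ys \<and> ys ! i \<le> c} \<le> j"
    using card_mono[of "{..<j}"] by fastforce
  with assms(2) show False
    by (simp add: length_filter_conv_card)
qed

lemma sorted_list_of_multiset_nth_le_add:
  fixes X Y :: "real multiset"
  assumes "rel_mset (\<lambda>a b. \<bar>a - b\<bar> \<le> e) X Y" "j < size X"
  shows "sorted_list_of_multiset Y ! j \<le> sorted_list_of_multiset X ! j + e"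
proof -
  let ?xs = "sorted_list_of_multiset X" and ?ys = "sorted_list_of_multiset Y"
  have "j < length (filter (\<lambda>a. a \<le> ?xs ! j) ?xs)"
    using assms(2) by (intro sorted_nth_less_length_filter_le) (simp_all flip: size_mset)
  also have "\<dots> = size (filter_mset (\<lambda>a. a \<le> ?xs ! j) X)"
    by (metis mset_filter mset_sorted_list_of_multiset size_mset)
  also have "\<dots> \<le> size (filter_mset (\<lambda>a. a \<le> ?xs ! j + e) Y)"
    using assms(1) by (rule size_filter_mset_le_rel_mset) auto
  also have "\<dots> = length (filter (\<lambda>a. a \<le> ?xs ! j + e) ?ys)"
    by (metis mset_filter mset_sorted_list_of_multiset size_mset)
  finally show ?thesis
    by (intro sorted_nth_le_if_less_length_filter_le) simp_all
qed

lemma sorted_list_of_multiset_nth_close: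
  fixes X Y :: "real multiset"
  assumes "rel_mset (\<lambda>a b. \<bar>a - b\<bar> \<le> e) X Y" "j < size X"
  shows "\<bar>sorted_list_of_multiset X ! j - sorted_list_of_multiset Y ! j\<bar> \<le> e"
proof -
  have "(\<lambda>a b. \<bar>a - b\<bar> \<le> e)\<inverse>\<inverse> = (\<lambda>a b. \<bar>a - b\<bar> \<le> e)"
    by (auto simp: fun_eq_iff abs_minus_commute)
  then have "rel_mset (\<lambda>a b. \<bar>a - b\<bar> \<le> e) Y X"
    using assms(1) by (metis multiset.rel_flip)
  moreover have "j < size Y"
    using assms by (metis rel_mset_size)
  ultimately show ?thesis
    using sorted_list_of_multiset_nth_le_add[OF assms] sorted_list_of_multiset_nth_le_add
    by fastforce
qed

lemma tendsto_coeff_prod: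
  fixes f :: "'a \<Rightarrow> 'i \<Rightarrow> 'b::real_normed_field poly"
  assumes "\<And>i n. i \<in> A \<Longrightarrow> ((\<lambda>x. coeff (f x i) n) \<longlongrightarrow> coeff (g i) n) F"
  shows "((\<lambda>x. coeff (\<Prod>i\<in>A. f x i) n) \<longlongrightarrow> coeff (\<Prod>i\<in>A. g i) n) F"
  using assms
proof (induction A arbitrary: n rule: infinite_finite_induct)
  case (insert a A)
  then show ?case
    by (simp add: coeff_mult) (intro tendsto_intros, auto)
qed simp_all

lemma tendsto_coeff_charpoly_mat:
  fixes M :: "'a \<Rightarrow> complex^'n::finite^'n"
  assumes "\<And>i j. ((\<lambda>x. M x $ i $ j) \<longlongrightarrow> M0 $ i $ j) F"
  shows "((\<lambda>x. coeff (charpoly_mat (M x)) n) \<longlongrightarrow> coeff (charpoly_mat M0) n) F"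
proof -
  let ?E = "\<lambda>A :: complex^'n^'n. \<lambda>i j. (if i = j then [:0, 1:] else 0) - [:A $ i $ j:]"
  have entry: "((\<lambda>x. coeff (?E (M x) i j) m) \<longlongrightarrow> coeff (?E M0 i j) m) F" for i j m
    using assms[of i j] by (cases m) (auto intro: tendsto_intros)
  have sign_coeff: "coeff (of_int (sign p) * P) n = of_int (sign p) * coeff P n"
    for p and P :: "complex poly"
    by (simp add: sign_def)
  have "((\<lambda>x. \<Sum>p | p permutes UNIV. of_int (sign p) * coeff (\<Prod>i\<in>UNIV. ?E (M x) i (p i)) n)
     \<longlongrightarrow> (\<Sum>p | p permutes UNIV. of_int (sign p) * coeff (\<Prod>i\<in>UNIV. ?E M0 i (p i)) n)) F"
    by (intro tendsto_sum tendsto_mult_left tendsto_coeff_prod entry)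
  then show ?thesis
    unfolding charpoly_mat_def Determinants.det_def coeff_sum by (simp add: sign_coeff)
qed

lemma isCont_eigenvalues_sorted_nth:
  fixes M :: "'a::t2_space \<Rightarrow> complex^'n::finite^'n"
  assumes "\<And>i j. isCont (\<lambda>k. M k $ i $ j) k0" "j < CARD('n)"
  shows "isCont (\<lambda>k. eigenvalues_sorted (M k) ! j) k0"
  unfolding isCont_def
proof (rule tendstoI)
  fix e :: real
  assume "e > 0"
  let ?p = "charpoly_mat (M k0)" and ?q = "\<lambda>k. charpoly_mat (M k)"
  have "((\<lambda>k. coeff (?q k) i) \<longlongrightarrow> coeff ?p i) (at k0)" for i
    using assms(1) by (intro tendsto_coeff_charpoly_mat) (simp add: isCont_def)
  then have "eventually (\<lambda>k. rel_mset (\<lambda>a b. norm (a - b) \<le> e / 2) (proots ?p) (proots (?q k))) (at k0)"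
    using \<open>e > 0\<close> by (intro eventually_proots_close monic_charpoly_mat) (simp_all add: degree_charpoly_mat)
  then show "eventually (\<lambda>k. dist (eigenvalues_sorted (M k) ! j) (eigenvalues_sorted (M k0) ! j) < e) (at k0)"
  proof (rule eventually_mono)
    fix k
    assume "rel_mset (\<lambda>a b. norm (a - b) \<le> e / 2) (proots ?p) (proots (?q k))"
    then have "rel_mset (\<lambda>a b. \<bar>a - b\<bar> \<le> e / 2) (image_mset Re (proots ?p)) (image_mset Re (proots (?q k)))"
      unfolding multiset.rel_map
      by (rule multiset.rel_mono_strong) (metis abs_Re_le_cmod minus_complex.sel(1) order_trans)
    moreover have "j < size (image_mset Re (proots ?p))"
      using assms(2) by (simp add: size_proots_complex degree_charpoly_mat)
    ultimately have "\<bar>eigenvalues_sorted (M k0) ! j - eigenvalues_sorted (M k) ! j\<bar> \<le> e / 2"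
      unfolding eigenvalues_sorted_def by (rule sorted_list_of_multiset_nth_close)
    then show "dist (eigenvalues_sorted (M k) ! j) (eigenvalues_sorted (M k0) ! j) < e"
      using \<open>e > 0\<close> by (simp add: dist_real_def abs_minus_commute)
  qed
qed

section \<open>Trigonometric polynomials on the torus\<close>

lemma cis_sum: "cis (sum f A) = (\<Prod>x\<in>A. cis (f x))"
  by (induction A rule: infinite_finite_induct) (simp_all add: cis_mult[symmetric])

lemma sum_roots_of_unity_power_eq_0:
  fixes m :: int
  assumes "\<not> int N dvd m"
  shows "(\<Sum>t<N. cis (2 * pi * of_int m * real t / real N)) = 0"
proof (cases "N = 0")
  case False
  define w where "w = cis (2 * pi * of_int m / real N)"
  have "w ^ N = cis (2 * pi * of_int m)"
    using False by (simp add: w_def Complex.DeMoivre)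
  then have "w ^ N = 1"
    by simp
  have "w \<noteq> 1"
  proof
    assume "w = 1"
    then have "cos (2 * pi * of_int m / real N) = 1"
      unfolding w_def by (metis cis.sel(1) one_complex.sel(1))
    then obtain z :: int where "2 * pi * of_int m / real N = of_int z * 2 * pi"
      by (auto simp: cos_one_2pi_int)
    then have "real_of_int m = real_of_int (z * int N)"
      using False by (simp add: field_simps)
    then show False
      using assms by (metis dvd_triv_right mult.commute of_int_eq_iff)
  qed
  have "cis (2 * pi * of_int m * real t / real N) = w ^ t" for t
    by (simp add: w_def Complex.DeMoivre field_simps)
  then show ?thesis
    using \<open>w ^ N = 1\<close> \<open>w \<noteq> 1\<close> by (simp add: sum_gp_strict)
qed simp

lemma inner_idx_add: "inner_idx (a + b) k = inner_idx a k + inner_idx b k"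
  unfolding inner_idx_def by (simp add: sum.distrib distrib_right)

lemma inner_idx_uminus: "inner_idx (- a) k = - inner_idx a k"
  unfolding inner_idx_def by (simp add: sum_negf)

lemma inner_idx_zero [simp]: "inner_idx 0 k = 0" "inner_idx m 0 = 0"
  unfolding inner_idx_def by simp_all

lemma sum_cis_inner_idx_grid:
  fixes m :: "int^'d::finite"
  assumes "\<And>j. \<bar>m $ j\<bar> < int N"
  shows "(\<Sum>s\<in>PiE UNIV (\<lambda>_. {..<N}). cis (inner_idx m (\<chi> j. 2 * pi * real (s j) / real N)))
    = (if m = 0 then of_nat (N ^ CARD('d)) else 0)"
proof -
  have "(\<Sum>s\<in>PiE UNIV (\<lambda>_. {..<N}). cis (inner_idx m (\<chi> j. 2 * pi * real (s j) / real N)))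
      = (\<Prod>j\<in>UNIV. \<Sum>t<N. cis (2 * pi * of_int (m $ j) * real t / real N))"
    by (subst prod_sum_PiE) (simp_all add: inner_idx_def cis_sum mult_ac)
  also have "\<dots> = (if m = 0 then of_nat (N ^ CARD('d)) else 0)"
  proof (cases "m = 0")
    case False
    then obtain j where "m $ j \<noteq> 0"
      by (metis Finite_Cartesian_Product.vec_eq_iff zero_index)
    then have "\<not> int N dvd m $ j"
      using assms[of j] by (auto dest: dvd_imp_le_int)
    then have "(\<Sum>t<N. cis (2 * pi * of_int (m $ j) * real t / real N)) = 0"
      by (rule sum_roots_of_unity_power_eq_0)
    with False show ?thesis
      by (simp add: prod_zero_iff) blast
  qed simp
  finally show ?thesis .
qed

lemma sum_cos_inner_idx_grid:
  fixes m :: "int^'d::finite"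
  assumes "\<And>j. \<bar>m $ j\<bar> < int N"
  shows "(\<Sum>s\<in>PiE UNIV (\<lambda>_. {..<N}). cos (\<phi> + inner_idx m (\<chi> j. 2 * pi * real (s j) / real N)))
    = (if m = 0 then real (N ^ CARD('d)) * cos \<phi> else 0)"
proof -
  have "(\<Sum>s\<in>PiE UNIV (\<lambda>_. {..<N}). cis (\<phi> + inner_idx m (\<chi> j. 2 * pi * real (s j) / real N)))
      = cis \<phi> * (if m = 0 then of_nat (N ^ CARD('d)) else 0)"
    by (simp add: cis_mult sum_cis_inner_idx_grid[OF assms, symmetric] sum_distrib_left)
  from arg_cong[OF this, of Re] show ?thesis
    by (simp add: Re_sum)
qed

lemma cos_add_pi_int: "cos (x + pi * of_int s) = (if even s then cos x else - cos x)"
proof -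
  have "sin (pi * of_int s) = 0"
    using sin_times_pi_eq_0[of "of_int s"] by (simp add: mult.commute)
  then show ?thesis
    by (simp add: cos_add cos_npi_int)
qed

definition trig_poly :: "'c set \<Rightarrow> ('c \<Rightarrow> real) \<Rightarrow> ('c \<Rightarrow> int^'d::finite) \<Rightarrow> real^'d \<Rightarrow> real" where
  "trig_poly C \<phi> m k = (\<Sum>c\<in>C. cos (\<phi> c + inner_idx (m c) k))"

lemma trig_poly_nonconstant_part_le:
  fixes m :: "'c \<Rightarrow> int^'d::finite"
  assumes "finite C" and osc: "\<And>a b. \<bar>trig_poly C \<phi> m a - trig_poly C \<phi> m b\<bar> \<le> B"
  shows "\<bar>\<Sum>c\<in>{c\<in>C. m c \<noteq> 0}. cos (\<phi> c)\<bar> \<le> B"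
proof -
  \<comment> \<open>Average over a grid so fine that all non-zero frequencies m c cancel.\<close>
  define N where "N = 1 + (\<Sum>c\<in>C. \<Sum>j\<in>UNIV. nat \<bar>m c $ j\<bar>)"
  define G where "G = PiE (UNIV :: 'd set) (\<lambda>_. {..<N})"
  define k where "k s = (\<chi> j. 2 * pi * real (s j) / real N)" for s :: "'d \<Rightarrow> nat"
  have "N > 0" and card: "card G = N ^ CARD('d)"
    by (simp_all add: N_def G_def card_PiE)
  have bound: "\<bar>m c $ j\<bar> < int N" if "c \<in> C" for c j
  proof -
    have "nat \<bar>m c $ j\<bar> \<le> (\<Sum>j\<in>UNIV. nat \<bar>m c $ j\<bar>)"
      by (rule member_le_sum) auto
    also have "\<dots> \<le> (\<Sum>c\<in>C. \<Sum>j\<in>UNIV. nat \<bar>m c $ j\<bar>)"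
      using that \<open>finite C\<close> by (intro member_le_sum) auto
    finally show ?thesis
      unfolding N_def by linarith
  qed
  have average: "(\<Sum>s\<in>G. cos (\<phi> c + inner_idx (m c) (k s)))
      = (if m c = 0 then real (card G) * cos (\<phi> c) else 0)" if "c \<in> C" for c
    using sum_cos_inner_idx_grid[of "m c" N "\<phi> c"] bound[OF that] card by (simp add: G_def k_def)
  have "(\<Sum>s\<in>G. trig_poly C \<phi> m 0 - trig_poly C \<phi> m (k s))
      = (\<Sum>c\<in>C. \<Sum>s\<in>G. cos (\<phi> c) - cos (\<phi> c + inner_idx (m c) (k s)))"
    unfolding trig_poly_def by (simp add: sum_subtractf sum_distrib_left sum.swap[of _ G])
  also have "\<dots> = (\<Sum>c\<in>C. if m c \<noteq> 0 then real (card G) * cos (\<phi> c) else 0)"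
    using average by (intro sum.cong) (simp_all add: sum_subtractf)
  also have "\<dots> = (\<Sum>c\<in>{c\<in>C. m c \<noteq> 0}. real (card G) * cos (\<phi> c))"
    using \<open>finite C\<close> by (simp add: sum.inter_filter)
  finally have "real (card G) * \<bar>\<Sum>c\<in>{c\<in>C. m c \<noteq> 0}. cos (\<phi> c)\<bar>
      = \<bar>\<Sum>s\<in>G. trig_poly C \<phi> m 0 - trig_poly C \<phi> m (k s)\<bar>"
    by (simp add: abs_mult flip: sum_distrib_left)
  also have "\<dots> \<le> (\<Sum>s\<in>G. \<bar>trig_poly C \<phi> m 0 - trig_poly C \<phi> m (k s)\<bar>)"
    by (rule sum_abs)
  also have "\<dots> \<le> real (card G) * B"
    using sum_mono[of G "\<lambda>s. \<bar>trig_poly C \<phi> m 0 - trig_poly C \<phi> m (k s)\<bar>" "\<lambda>_. B"] osc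
    by simp
  finally show ?thesis
    using \<open>N > 0\<close> card by simp
qed

lemma trig_poly_odd_part_le:
  fixes m :: "'c \<Rightarrow> int^'d::finite"
  assumes "finite C" and osc: "\<And>a b. \<bar>trig_poly C \<phi> m a - trig_poly C \<phi> m b\<bar> \<le> B"
  shows "2 * \<bar>\<Sum>c\<in>{c\<in>C. odd (\<Sum>j\<in>UNIV. m c $ j)}. cos (\<phi> c)\<bar> \<le> B"
proof -
  have pi_vector: "inner_idx z (\<chi> j. pi) = pi * of_int (\<Sum>j\<in>UNIV. z $ j)" for z :: "int^'d"
    unfolding inner_idx_def by (simp add: sum_distrib_left mult.commute)
  have "trig_poly C \<phi> m 0 - trig_poly C \<phi> m (\<chi> j. pi)
      = (\<Sum>c\<in>C. if odd (\<Sum>j\<in>UNIV. m c $ j) then 2 * cos (\<phi> c) else 0)"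
    unfolding trig_poly_def sum_subtractf[symmetric]
    by (intro sum.cong) (simp_all add: pi_vector cos_add_pi_int del: of_int_sum)
  also have "\<dots> = (\<Sum>c\<in>{c\<in>C. odd (\<Sum>j\<in>UNIV. m c $ j)}. 2 * cos (\<phi> c))"
    using \<open>finite C\<close> by (simp add: sum.inter_filter)
  finally show ?thesis
    using osc[of 0 "\<chi> j. pi"] by (simp add: abs_mult flip: sum_distrib_left)
qed

section \<open>Closed walks and the fiber matrices\<close>

lemma is_walk_Nil [simp]: "is_walk s t x y [] \<longleftrightarrow> x = y"
  by (simp add: is_walk_def)

lemma is_walk_Cons [simp]: "is_walk s t x y (e # c) \<longleftrightarrow> s e = x \<and> is_walk s t (t e) y c"
proof (cases c)
  case (Cons e' c')
  have "is_walk s t x y (e # c) \<longleftrightarrow> s e = x \<and> t (last c) = y \<and> t e = s (hd c) \<and>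
      (\<forall>i < length c - 1. t (c ! i) = s (c ! (i + 1)))"
    unfolding is_walk_def using Cons by (auto simp: nth_Cons split: nat.splits)
  moreover have "is_walk s t (t e) y c \<longleftrightarrow> s (hd c) = t e \<and> t (last c) = y \<and>
      (\<forall>i < length c - 1. t (c ! i) = s (c ! (i + 1)))"
    unfolding is_walk_def using Cons by auto
  ultimately show ?thesis
    by auto
qed (auto simp: is_walk_def)

lemma is_cycle_iff_is_walk:
  assumes "c \<noteq> []"
  shows "is_cycle s t c \<longleftrightarrow> is_walk s t (s (hd c)) (s (hd c)) c"
proof -
  obtain m where m: "length c = Suc m"
    using assms by (cases c) auto
  have "is_cycle s t c \<longleftrightarrow> t (c ! m) = s (c ! 0) \<and> (\<forall>i<m. t (c ! i) = s (c ! (i + 1)))"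
    using assms by (simp add: is_cycle_def m All_less_Suc)
  moreover have "is_walk s t (s (hd c)) (s (hd c)) c \<longleftrightarrow>
      t (c ! m) = s (c ! 0) \<and> (\<forall>i<m. t (c ! i) = s (c ! (i + 1)))"
    using assms by (simp add: is_walk_def m hd_conv_nth last_conv_nth)
  ultimately show ?thesis
    by simp
qed

lemma finite_lists_length_eq_conj: "finite {c :: 'e::finite list. length c = n \<and> P c}"
proof -
  have "finite {c :: 'e list. length c = n}"
    using finite_lists_length_eq[of "UNIV :: 'e set" n] by simp
  then show ?thesis
    by (rule finite_subset[rotated]) auto
qed

lemma sum_lists_length_Suc:
  "(\<Sum>c | length c = Suc n \<and> P c. g c)
     = (\<Sum>e\<in>UNIV. \<Sum>c | length c = n \<and> P (e # c). g (e # c :: 'e::finite list))"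
proof -
  let ?S = "SIGMA e:UNIV. {c. length c = n \<and> P (e # c)}"
  have eq: "{c. length c = Suc n \<and> P c} = (\<lambda>(e, c). e # c) ` ?S"
    by (auto simp: length_Suc_conv image_iff)
  have "inj_on (\<lambda>(e, c). e # c) ?S"
    by (auto simp: inj_on_def)
  then have "(\<Sum>c | length c = Suc n \<and> P c. g c) = (\<Sum>(e, c)\<in>?S. g (e # c))"
    unfolding eq by (subst sum.reindex) (simp_all add: case_prod_beta comp_def)
  then show ?thesis
    by (simp add: sum.Sigma finite_lists_length_eq_conj)
qed

lemma matrix_power_entry_walks:
  fixes s t :: "'e::finite \<Rightarrow> 'v::finite" and w :: "'e \<Rightarrow> 'a::comm_semiring_1"
  assumes M: "\<And>x y. M $ x $ y = (\<Sum>e | s e = x \<and> t e = y. w e)"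
  shows "matrix_power M n $ x $ y = (\<Sum>c | length c = n \<and> is_walk s t x y c. prod_list (map w c))"
proof (induction n arbitrary: x)
  case 0
  have "{c :: 'e list. length c = 0 \<and> is_walk s t x y c} = (if x = y then {[]} else {})"
    by auto
  then show ?case
    by (simp add: Finite_Cartesian_Product.mat_def)
next
  case (Suc n)
  have "matrix_power M (Suc n) $ x $ y
      = (\<Sum>z\<in>UNIV. \<Sum>e | s e = x \<and> t e = z. w e * matrix_power M n $ z $ y)"
    by (simp add: matrix_matrix_mult_def M sum_distrib_right)
  also have "\<dots> = (\<Sum>z\<in>UNIV. \<Sum>e\<in>{e\<in>{e. s e = x}. t e = z}. w e * matrix_power M n $ t e $ y)"
    by (intro sum.cong) auto
  also have "\<dots> = (\<Sum>e | s e = x. w e * matrix_power M n $ t e $ y)"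
    by (rule sum.group) auto
  also have "\<dots> = (\<Sum>e\<in>UNIV. \<Sum>c | length c = n \<and> is_walk s t x y (e # c). prod_list (map w (e # c)))"
    by (rule sum.mono_neutral_cong_left) (auto simp: Suc sum_distrib_left)
  also have "\<dots> = (\<Sum>c | length c = Suc n \<and> is_walk s t x y c. prod_list (map w c))"
    by (rule sum_lists_length_Suc[symmetric])
  finally show ?case .
qed

definition cycles_of_length :: "('e \<Rightarrow> 'v) \<Rightarrow> ('e \<Rightarrow> 'v) \<Rightarrow> nat \<Rightarrow> 'e list set" where
  "cycles_of_length src tgt n = {c. length c = n \<and> is_cycle src tgt c}"

lemma finite_cycles_of_length: "finite (cycles_of_length src tgt n :: 'e::finite list set)"
  unfolding cycles_of_length_def by (rule finite_lists_length_eq_conj)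

lemma trace_matrix_power_cycles:
  fixes s t :: "'e::finite \<Rightarrow> 'v::finite" and w :: "'e \<Rightarrow> 'a::comm_semiring_1"
  assumes "\<And>x y. M $ x $ y = (\<Sum>e | s e = x \<and> t e = y. w e)" "n \<ge> 1"
  shows "trace (matrix_power M n) = (\<Sum>c\<in>cycles_of_length s t n. prod_list (map w c))"
proof -
  have "{c. length c = n \<and> is_walk s t x x c} = {c \<in> cycles_of_length s t n. s (hd c) = x}" for x
  proof -
    have "is_walk s t x x c \<longleftrightarrow> s (hd c) = x \<and> is_cycle s t c" if "length c = n" for c
    proof -
      have "c \<noteq> []"
        using that assms(2) by auto
      then have "is_cycle s t c \<longleftrightarrow> is_walk s t (s (hd c)) (s (hd c)) c"
        by (rule is_cycle_iff_is_walk)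
      with \<open>c \<noteq> []\<close> show ?thesis
        by (cases c) auto
    qed
    then show ?thesis
      by (auto simp: cycles_of_length_def)
  qed
  then have "trace (matrix_power M n)
      = (\<Sum>x\<in>UNIV. \<Sum>c\<in>{c \<in> cycles_of_length s t n. s (hd c) = x}. prod_list (map w c))"
    by (simp add: trace_def matrix_power_entry_walks[OF assms(1)])
  also have "\<dots> = (\<Sum>c\<in>cycles_of_length s t n. prod_list (map w c))"
    by (rule sum.group) (simp_all add: finite_cycles_of_length)
  finally show ?thesis .
qed

lemma prod_list_cis_walk:
  "prod_list (map (\<lambda>e. cis (\<alpha> e + inner_idx (\<tau> e) k)) c)
     = cis (flux \<alpha> c + inner_idx (walk_index \<tau> c) k)"
  by (induction c) (simp_all add: flux_def walk_index_def inner_idx_add cis_mult algebra_simps)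

lemma trace_fiber_matrix_power:
  fixes src tgt :: "'e::finite \<Rightarrow> 'v::finite"
  assumes "n \<ge> 1"
  shows "trace (matrix_power (fiber_matrix src tgt \<alpha> \<tau> k) n)
    = (\<Sum>c\<in>cycles_of_length src tgt n. cis (flux \<alpha> c + inner_idx (walk_index \<tau> c) k))"
  using trace_matrix_power_cycles[where M = "fiber_matrix src tgt \<alpha> \<tau> k" and s = src and t = tgt
      and w = "\<lambda>e. cis (\<alpha> e + inner_idx (\<tau> e) k)", OF _ assms]
  by (simp add: fiber_matrix_def prod_list_cis_walk)

lemma fiber_matrix_row_sum_le:
  fixes src tgt :: "'e::finite \<Rightarrow> 'v::finite"
  shows "(\<Sum>y\<in>UNIV. norm (fiber_matrix src tgt \<alpha> \<tau> k $ x $ y)) \<le> real (max_degree src)"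
proof -
  have "norm (fiber_matrix src tgt \<alpha> \<tau> k $ x $ y) \<le> real (card {e. src e = x \<and> tgt e = y})" for y
    unfolding fiber_matrix_def
    using norm_sum[of "\<lambda>e. cis (\<alpha> e + inner_idx (\<tau> e) k)" "{e. src e = x \<and> tgt e = y}"] by simp
  then have "(\<Sum>y\<in>UNIV. norm (fiber_matrix src tgt \<alpha> \<tau> k $ x $ y))
      \<le> (\<Sum>y\<in>UNIV. real (card {e. src e = x \<and> tgt e = y}))"
    by (rule sum_mono)
  also have "\<dots> = real (card {e. src e = x})"
  proof -
    have "(\<Sum>y\<in>UNIV. card {e. src e = x \<and> tgt e = y})
        = (\<Sum>y\<in>UNIV. \<Sum>e\<in>{e\<in>{e. src e = x}. tgt e = y}. 1 :: nat)"
      by (intro sum.cong) auto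
    also have "\<dots> = (\<Sum>e\<in>{e. src e = x}. 1)"
      by (rule sum.group) auto
    finally show ?thesis
      by (simp flip: of_nat_sum)
  qed
  also have "\<dots> \<le> real (max_degree src)"
    unfolding max_degree_def degree_at_def by (simp add: Max_ge)
  finally show ?thesis .
qed

lemma isCont_band_fun:
  fixes src tgt :: "'e::finite \<Rightarrow> 'v::finite" and \<tau> :: "'e \<Rightarrow> int^'d::finite"
  assumes "j < CARD('v)"
  shows "isCont (band_fun src tgt \<alpha> \<tau> j) k0"
proof -
  have "isCont (\<lambda>k. fiber_matrix src tgt \<alpha> \<tau> k $ x $ y) k0" for x y
    unfolding isCont_def fiber_matrix_def inner_idx_def vec_lambda_beta
    by (intro tendsto_intros tendsto_cis tendsto_vec_nth tendsto_ident_at)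
  then show ?thesis
    unfolding band_fun_def[abs_def] using assms by (rule isCont_eigenvalues_sorted_nth)
qed

lemma total_bandwidth_nonneg: "total_bandwidth src tgt \<alpha> \<tau> \<ge> 0"
  unfolding total_bandwidth_def by (simp add: sum_nonneg)

section \<open>Bandwidth estimate\<close>

lemma abs_diff_le_measure_interval:
  fixes I :: "real set"
  assumes "is_interval I" "bounded I" "x \<in> I" "y \<in> I"
  shows "\<bar>x - y\<bar> \<le> measure lborel I"
proof -
  obtain D where D: "\<And>z. z \<in> I \<Longrightarrow> \<bar>z\<bar> \<le> D"
    using assms(2) by (auto simp: bounded_real)
  have "I \<subseteq> {-D..D}"
  proof
    fix z
    assume "z \<in> I"
    then show "z \<in> {-D..D}"
      using D[of z] by (simp add: abs_le_iff)
  qed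
  then have "emeasure lborel I \<le> emeasure lborel {-D..D}"
    by (rule emeasure_mono) simp
  also have "\<dots> < \<infinity>"
    by (simp add: emeasure_lborel_Icc_eq)
  finally have "emeasure lborel I < \<infinity>" .
  then have fin: "I \<in> fmeasurable lborel"
    using assms(1) by (intro fmeasurableI) (simp_all add: real_interval_borel_measurable)
  have "{min x y..max x y} \<subseteq> I"
  proof
    fix z
    assume "z \<in> {min x y..max x y}"
    then show "z \<in> I"
      using mem_is_interval_1_I[OF assms(1,3,4)] mem_is_interval_1_I[OF assms(1,4,3)]
      by (cases "x \<le> y") (auto simp: min_def max_def)
  qed
  then have "measure lborel {min x y..max x y} \<le> measure lborel I"
    by (rule measure_mono_fmeasurable) (simp_all add: fin)
  moreover have "measure lborel {min x y..max x y} = \<bar>x - y\<bar>"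
    by (simp add: measure_lborel_Icc min_def max_def)
  ultimately show ?thesis
    by simp
qed

lemma abs_power_diff_le:
  fixes x y D :: real
  assumes "\<bar>x\<bar> \<le> D" "\<bar>y\<bar> \<le> D"
  shows "\<bar>x ^ n - y ^ n\<bar> \<le> real n * D ^ (n - 1) * \<bar>x - y\<bar>"
proof -
  have "\<bar>\<Sum>i<n. y ^ (n - Suc i) * x ^ i\<bar> \<le> (\<Sum>i<n. \<bar>y\<bar> ^ (n - Suc i) * \<bar>x\<bar> ^ i)"
    by (rule order_trans[OF sum_abs]) (simp add: abs_mult power_abs)
  also have "\<dots> \<le> (\<Sum>i<n. D ^ (n - Suc i) * D ^ i)"
    using assms by (intro sum_mono mult_mono power_mono) auto
  also have "\<dots> = real n * D ^ (n - 1)"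
    by (simp flip: power_add)
  finally have "\<bar>\<Sum>i<n. y ^ (n - Suc i) * x ^ i\<bar> \<le> real n * D ^ (n - 1)" .
  then show ?thesis
    by (simp add: power_diff_sumr2 abs_mult mult_left_mono mult.commute)
qed

locale magnetic_quotient_graph =
  fixes src tgt :: "'e::finite \<Rightarrow> 'v::finite"
    and inv :: "'e \<Rightarrow> 'e"
    and \<tau> :: "'e \<Rightarrow> int^'d::finite"
    and \<alpha> :: "'e \<Rightarrow> real"
  assumes inv_inv: "\<And>e. inv (inv e) = e"
    and src_inv: "\<And>e. src (inv e) = tgt e"
    and tgt_inv: "\<And>e. tgt (inv e) = src e"
    and tau_inv: "\<And>e. \<tau> (inv e) = - \<tau> e"
    and alpha_inv: "\<And>e. \<alpha> (inv e) = - \<alpha> e"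
begin

lemma fiber_matrix_hermitian:
  "fiber_matrix src tgt \<alpha> \<tau> k $ y $ x = cnj (fiber_matrix src tgt \<alpha> \<tau> k $ x $ y)"
proof -
  have "fiber_matrix src tgt \<alpha> \<tau> k $ y $ x
      = (\<Sum>e | src e = x \<and> tgt e = y. cis (\<alpha> (inv e) + inner_idx (\<tau> (inv e)) k))"
    unfolding fiber_matrix_def
    by (simp, rule sum.reindex_bij_witness[of _ inv inv]) (auto simp: inv_inv src_inv tgt_inv)
  also have "\<dots> = cnj (fiber_matrix src tgt \<alpha> \<tau> k $ x $ y)"
    by (simp add: fiber_matrix_def tau_inv alpha_inv inner_idx_uminus cis_cnj)
  finally show ?thesis .
qed

lemma abs_band_fun_le:
  assumes "j < CARD('v)"
  shows "\<bar>band_fun src tgt \<alpha> \<tau> j k\<bar> \<le> real (max_degree src)"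
  using hermitian_eigenvalues_sorted[OF fiber_matrix_hermitian fiber_matrix_row_sum_le] assms
  unfolding band_fun_def by (metis nth_mem)

lemma sum_band_fun_power:
  assumes "n \<ge> 1"
  shows "(\<Sum>j<CARD('v). band_fun src tgt \<alpha> \<tau> j k ^ n)
    = trig_poly (cycles_of_length src tgt n) (flux \<alpha>) (walk_index \<tau>) k"
  using hermitian_eigenvalues_sorted(3)[OF fiber_matrix_hermitian fiber_matrix_row_sum_le]
  by (simp add: band_fun_def trig_poly_def trace_fiber_matrix_power[OF assms] Re_sum)

lemma abs_band_fun_diff_le_measure:
  assumes "j < CARD('v)"
  shows "\<bar>band_fun src tgt \<alpha> \<tau> j a - band_fun src tgt \<alpha> \<tau> j b\<bar>
    \<le> measure lborel (range (band_fun src tgt \<alpha> \<tau> j))"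
proof (rule abs_diff_le_measure_interval)
  have "continuous_on UNIV (band_fun src tgt \<alpha> \<tau> j)"
    using assms by (intro continuous_at_imp_continuous_on ballI isCont_band_fun)
  then show "is_interval (range (band_fun src tgt \<alpha> \<tau> j))"
    unfolding is_interval_connected_1 by (rule connected_continuous_image) (simp add: connected_UNIV)
  show "bounded (range (band_fun src tgt \<alpha> \<tau> j))"
    using abs_band_fun_le[OF assms] by (auto simp: bounded_real)
qed simp_all

lemma trig_poly_cycles_oscillation_le:
  assumes "n \<ge> 1"
  shows "\<bar>trig_poly (cycles_of_length src tgt n) (flux \<alpha>) (walk_index \<tau>) a
           - trig_poly (cycles_of_length src tgt n) (flux \<alpha>) (walk_index \<tau>) b\<bar>
    \<le> real n * real (max_degree src) ^ (n - 1) * total_bandwidth src tgt \<alpha> \<tau>"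
proof -
  let ?b = "band_fun src tgt \<alpha> \<tau>" and ?K = "real n * real (max_degree src) ^ (n - 1)"
  have "\<bar>?b j a ^ n - ?b j b ^ n\<bar> \<le> ?K * measure lborel (range (?b j))" if "j < CARD('v)" for j
  proof -
    have "\<bar>?b j a ^ n - ?b j b ^ n\<bar> \<le> ?K * \<bar>?b j a - ?b j b\<bar>"
      by (intro abs_power_diff_le abs_band_fun_le that)
    also have "\<dots> \<le> ?K * measure lborel (range (?b j))"
      by (intro mult_left_mono abs_band_fun_diff_le_measure that) simp
    finally show ?thesis .
  qed
  then have "(\<Sum>j<CARD('v). \<bar>?b j a ^ n - ?b j b ^ n\<bar>)
      \<le> (\<Sum>j<CARD('v). ?K * measure lborel (range (?b j)))"
    by (intro sum_mono) simp
  moreover have "\<bar>\<Sum>j<CARD('v). ?b j a ^ n - ?b j b ^ n\<bar> \<le> (\<Sum>j<CARD('v). \<bar>?b j a ^ n - ?b j b ^ n\<bar>)"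
    by (rule sum_abs)
  ultimately show ?thesis
    by (simp add: sum_band_fun_power[OF assms, symmetric] total_bandwidth_def sum_distrib_left
        sum_subtractf)
qed

end

theorem corollary4p1:
  fixes src tgt :: "'e::finite \<Rightarrow> 'v::finite"
    and inv :: "'e \<Rightarrow> 'e"
    and \<tau> :: "'e \<Rightarrow> int^'d::finite"
    and \<alpha> :: "'e \<Rightarrow> real"
    and n :: nat
  assumes inv_inv: "\<And>e. inv (inv e) = e"
    and inv_neq: "\<And>e. inv e \<noteq> e"
    and src_inv: "\<And>e. src (inv e) = tgt e"
    and tgt_inv: "\<And>e. tgt (inv e) = src e"
    and tau_inv: "\<And>e. \<tau> (inv e) = - \<tau> e"
    and alpha_inv: "\<And>e. \<alpha> (inv e) = - \<alpha> e"
    and connected: "\<And>x y m. \<exists>c. is_walk src tgt x y c \<and> walk_index \<tau> c = m"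
    and n_pos: "n \<ge> 1"
  shows "total_bandwidth src tgt \<alpha> \<tau> \<ge>
           max \<bar>\<Sum>c\<in>cycles_plus src tgt \<tau> n. cos (flux \<alpha> c)\<bar>
               (2 * \<bar>\<Sum>c\<in>cycles_odd src tgt \<tau> n. cos (flux \<alpha> c)\<bar>)
           / (real n * real (max_degree src) ^ (n - 1))"
proof -
  interpret magnetic_quotient_graph src tgt inv \<tau> \<alpha>
    using inv_inv src_inv tgt_inv tau_inv alpha_inv by unfold_locales
  let ?C = "cycles_of_length src tgt n" and ?T = "total_bandwidth src tgt \<alpha> \<tau>"
  define K where "K = real n * real (max_degree src) ^ (n - 1)"
  note osc = trig_poly_cycles_oscillation_le[OF n_pos, folded K_def]
  have "{c \<in> ?C. walk_index \<tau> c \<noteq> 0} = cycles_plus src tgt \<tau> n"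
    and "{c \<in> ?C. odd (\<Sum>j\<in>UNIV. walk_index \<tau> c $ j)} = cycles_odd src tgt \<tau> n"
    by (auto simp: cycles_of_length_def cycles_plus_def cycles_odd_def)
  then have "max \<bar>\<Sum>c\<in>cycles_plus src tgt \<tau> n. cos (flux \<alpha> c)\<bar>
      (2 * \<bar>\<Sum>c\<in>cycles_odd src tgt \<tau> n. cos (flux \<alpha> c)\<bar>) \<le> K * ?T"
    using trig_poly_nonconstant_part_le[OF finite_cycles_of_length osc]
      trig_poly_odd_part_le[OF finite_cycles_of_length osc] by simp
  moreover have "K \<ge> 0"
    by (simp add: K_def)
  \<comment> \<open>If K = 0 the right-hand side is a division by zero, hence 0.\<close>
  ultimately show ?thesis
    using total_bandwidth_nonneg[of src tgt \<alpha> \<tau>] unfolding K_def[symmetric]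
    by (cases "K = 0") (simp_all add: pos_divide_le_eq mult.commute)
qed

end
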